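(* There is a constant $c$ and a choice of the parameter $G=\Theta(\log(1/\beta))$ such that for every $\beta\in(0,1)$, every $\varepsilon>0$, all positive integers $m\le n$ (with $G$ dividing $n$), every even $d$, and every attacker $M$: with probability at least $1-\beta$, \[ \mathrm{Manip}_{m,n}(\mathtt{RAPTOR}_{n,G,\varepsilon},\mathbf U,M)=\text{``Uniform''}, \] and for every distribution $\mathbf P$ on $[d]$ with $\|\mathbf P-\mathbf U\|_1\ge c\cdot\frac{e^\varepsilon+1}{e^\varepsilon-1}\left(\sqrt{\frac{dG}{n}\ln\frac G\beta}+\frac{mG\sqrt d}{n}\right)$, with probability at least $1-\beta$, \[ \mathrm{Manip}_{m,n}(\mathtt{RAPTOR}_{n,G,\varepsilon},\mathbf P,M)=\text{``Not uniform''}. \]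
   Context: $\mathbf U$ is the uniform distribution on $[d]$; $\|\mathbf P-\mathbf U\|_1=\sum_{j\in[d]}|\mathbf P(j)-\mathbf U(j)|$. Randomized response: for $b\in\{\pm1\}$, $R^{RR}_\varepsilon(b)$ outputs $b\cdot\frac{e^\varepsilon+1}{e^\varepsilon-1}$ with probability $\frac{e^\varepsilon}{e^\varepsilon+1}$ and $-b\cdot\frac{e^\varepsilon+1}{e^\varepsilon-1}$ otherwise. Protocol $\mathtt{RAPTOR}_{n,G,\varepsilon}$ (with parameters $m,\beta$ known to the aggregator): public randomness consists of independent uniformly random subsets $S_1,\dots,S_G\subset[d]$ of size $d/2$. Users are split into $G$ contiguous groups; group $g$ consists of users $i$ with $1+(g-1)n/G\le i\le gn/G$. A user $i$ in group $g$ with data $x_i\in[d]$ sets $x_i'=+1$ if $x_i\in S_g$ and $x_i'=-1$ otherwise, and sends $y_i\sim R^{RR}_\varepsilon(x_i')$. The aggregator sets $\alpha_G=\frac{e^\varepsilon+1}{e^\varepsilon-1}\left(\sqrt{\frac{6G}{n}\ln\frac{4G}{\beta}}+\frac{2mG}{n}\right)$, computes $\tilde p(S_g)=\frac Gn\sum_{i\text{ in group }g}y_i$ for each $g$, and outputs ``Not uniform'' if $|\tilde p(S_g)|>2\alpha_G$ for some $g$, and ``Uniform'' otherwise. Manipulation game $\mathrm{Manip}_{m,n}(\Pi,\mathbf P,M)$: the data $x_1,\dots,x_n$ are drawn i.i.d. from $\mathbf P$; the public randomness $S$ is sampled; the attacker $M$ chooses a set $C\subseteq[n]$ with $|C|=m$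 and messages $y_i\in\{\pm\frac{e^\varepsilon+1}{e^\varepsilon-1}\}$ for $i\in C$ (possibly depending on the data, $S$, and its own randomness); each $i\notin C$ independently sends its honest message; the output is the aggregator's output on $(y_1,\dots,y_n)$ and $S$. *)

theory Defs
  imports "HOL-Probability.Probability" "HOL-Library.Landau_Symbols"
begin

text \<open>Users are indexed 0..n-1, data values lie in {0..<d} (standing for [d]),
  groups are indexed 0..G-1.\<close>

datatype verdict = Uniform | NotUniform

definition rr_scale :: "real \<Rightarrow> real" where
  "rr_scale \<epsilon> = (exp \<epsilon> + 1) / (exp \<epsilon> - 1)"

definition RR :: "real \<Rightarrow> real \<Rightarrow> real pmf" where
  "RR \<epsilon> b = map_pmf (\<lambda>keep. if keep then b * rr_scale \<epsilon> else - b * rr_scale \<epsilon>)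
                     (bernoulli_pmf (exp \<epsilon> / (exp \<epsilon> + 1)))"

definition uniform_dist :: "nat \<Rightarrow> nat pmf" where
  "uniform_dist d = pmf_of_set {..<d}"

definition l1_to_uniform :: "nat \<Rightarrow> nat pmf \<Rightarrow> real" where
  "l1_to_uniform d P = (\<Sum>j<d. \<bar>pmf P j - pmf (uniform_dist d) j\<bar>)"

definition group_users :: "nat \<Rightarrow> nat \<Rightarrow> nat \<Rightarrow> nat set" where
  "group_users n G g = {g * (n div G) ..< Suc g * (n div G)}"

definition group_of :: "nat \<Rightarrow> nat \<Rightarrow> nat \<Rightarrow> nat" where
  "group_of n G i = i div (n div G)"

definition public_rand :: "nat \<Rightarrow> nat \<Rightarrow> (nat \<Rightarrow> nat set) pmf" where
  "public_rand d G = Pi_pmf {..<G} {} (\<lambda>_. pmf_of_set {A. A \<subseteq> {..<d} \<and> card A = d div 2})"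

definition raptor_client :: "nat \<Rightarrow> nat \<Rightarrow> real \<Rightarrow> (nat \<Rightarrow> nat set) \<Rightarrow> nat \<Rightarrow> nat \<Rightarrow> real pmf" where
  "raptor_client n G \<epsilon> S i x = RR \<epsilon> (if x \<in> S (group_of n G i) then 1 else -1)"

definition raptor_alpha :: "nat \<Rightarrow> nat \<Rightarrow> real \<Rightarrow> nat \<Rightarrow> real \<Rightarrow> real" where
  "raptor_alpha n G \<epsilon> m \<beta> = rr_scale \<epsilon> *
     (sqrt (6 * real G / real n * ln (4 * real G / \<beta>)) + 2 * real m * real G / real n)"

definition raptor_aggregate :: "nat \<Rightarrow> nat \<Rightarrow> real \<Rightarrow> nat \<Rightarrow> real \<Rightarrow> (nat \<Rightarrow> real) \<Rightarrow> verdict" where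
  "raptor_aggregate n G \<epsilon> m \<beta> y =
     (if \<exists>g<G. \<bar>real G / real n * (\<Sum>i\<in>group_users n G g. y i)\<bar> > 2 * raptor_alpha n G \<epsilon> m \<beta>
      then NotUniform else Uniform)"

text \<open>An attacker maps (data, public randomness) to a distribution (its own randomness)
  over a corrupted set C and messages for the corrupted users.\<close>
type_synonym attacker = "(nat \<Rightarrow> nat) \<Rightarrow> (nat \<Rightarrow> nat set) \<Rightarrow> (nat set \<times> (nat \<Rightarrow> real)) pmf"

definition valid_attacker :: "nat \<Rightarrow> nat \<Rightarrow> real \<Rightarrow> attacker \<Rightarrow> bool" where
  "valid_attacker n m \<epsilon> M \<longleftrightarrow>
     (\<forall>x S C y. (C, y) \<in> set_pmf (M x S) \<longrightarrow>
        C \<subseteq> {..<n} \<and> card C = m \<and> (\<forall>i\<in>C. y i \<in> {rr_scale \<epsilon>, - rr_scale \<epsilon>}))"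

definition manip :: "nat \<Rightarrow> nat \<Rightarrow> nat \<Rightarrow> real \<Rightarrow> real \<Rightarrow> nat \<Rightarrow> nat pmf \<Rightarrow> attacker \<Rightarrow> verdict pmf" where
  "manip m n G \<epsilon> \<beta> d P M =
     bind_pmf (Pi_pmf {..<n} 0 (\<lambda>_. P)) (\<lambda>x.
     bind_pmf (public_rand d G) (\<lambda>S.
     bind_pmf (M x S) (\<lambda>(C, ya).
     bind_pmf (Pi_pmf {..<n} 0 (\<lambda>i. raptor_client n G \<epsilon> S i (x i))) (\<lambda>yh.
     return_pmf (raptor_aggregate n G \<epsilon> m \<beta> (\<lambda>i. if i \<in> C then ya i else yh i))))))"

end

theory Submission
  imports Defs "HOL-Combinatorics.Transposition"
begin

text \<open>
  Group g reports the statistic G/n times the sum of its messages, whose honest mean is the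
  bias P(S_g) - P(-S_g) of P on the public half subset S_g.  Hoeffding's
  inequality and a union bound over the groups put every honest statistic within the noise bound
  of its bias with probability 1 - \<beta>/2, and m corrupted users shift a statistic by at most
  2 rr_scale m G/n.  Under the uniform distribution all biases vanish, so no statistic exceeds 2\<alpha>.

  For a far distribution let \<delta> = P - U.  The bias on a random half subset A is the sum of the
  \<delta>(j) weighted by balanced signs, and the exact pair and quadruple correlations of these signs
  bound its second moment below by ||\<delta>||_2^2 and its fourth moment above by 31 ||\<delta>||_2^4.  By
  Paley--Zygmund the squared bias exceeds ||\<delta>||_2^2 / 2 with probability at least 1/124, so
  with G of order ln(1/\<beta>) groups some group has such a set with probability 1 - \<beta>/2.  Its bias
  is at least ||\<delta>||_1 / sqrt(2d) \<ge> 3\<alpha>, and its statistic exceeds 2\<alpha>.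
\<close>

section \<open>Correlations of random half subsets\<close>

definition half_subsets :: "nat \<Rightarrow> nat set set" where
  "half_subsets d = {A. A \<subseteq> {..<d} \<and> card A = d div 2}"

definition sign_mem :: "nat set \<Rightarrow> nat \<Rightarrow> real" where
  "sign_mem A j = (if j \<in> A then 1 else -1)"

lemma two_le_even_pos: "even d \<Longrightarrow> 0 < d \<Longrightarrow> real d \<ge> 2"
  by (metis dvd_imp_le of_nat_le_iff of_nat_numeral)

lemma finite_half_subsets: "finite (half_subsets d)"
  by (rule finite_subset[of _ "Pow {..<d}"]) (auto simp: half_subsets_def)

lemma half_subsets_nonempty: "half_subsets d \<noteq> {}"
proof -
  have "{..<d div 2} \<in> half_subsets d" by (auto simp: half_subsets_def)
  thus ?thesis by blast
qed

lemma sign_mem_square [simp]: "sign_mem A j * sign_mem A j = 1"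
  by (simp add: sign_mem_def)

lemma sum_sign_mem_half_subset:
  assumes "even d" "A \<in> half_subsets d"
  shows "(\<Sum>j<d. sign_mem A j) = 0"
proof -
  have A: "A \<subseteq> {..<d}" "card A = d div 2" using assms(2) by (auto simp: half_subsets_def)
  have "(\<Sum>j<d. sign_mem A j) = (\<Sum>j\<in>A. sign_mem A j) + (\<Sum>j\<in>{..<d} - A. sign_mem A j)"
    using A(1) by (metis add.commute finite_lessThan sum.subset_diff)
  also have "\<dots> = real (card A) - real (card ({..<d} - A))" by (simp add: sign_mem_def)
  also have "card ({..<d} - A) = d - card A"
    using A(1) by (simp add: card_Diff_subset finite_subset)
  finally show ?thesis using A(2) assms(1) by auto
qed

lemma sign_mem_transpose_image:
  "sign_mem (Transposition.transpose x y ` A) j = sign_mem A (Transposition.transpose x y j)"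
  by (simp add: sign_mem_def in_transpose_image_iff)

lemma transpose_image_half_subsets:
  assumes "x < d" "y < d" "A \<in> half_subsets d"
  shows "Transposition.transpose x y ` A \<in> half_subsets d"
proof -
  have "Transposition.transpose x y z < d" if "z < d" for z
    using assms that by (simp add: Transposition.transpose_def)
  thus ?thesis using assms(3) by (auto simp: half_subsets_def card_image)
qed

lemma sum_half_subsets_transpose:
  assumes "x < d" "y < d"
  shows "(\<Sum>A\<in>half_subsets d. f A) = (\<Sum>A\<in>half_subsets d. f (Transposition.transpose x y ` A))"
  by (rule sum.reindex_bij_witness[where i="\<lambda>A. Transposition.transpose x y ` A"
        and j="\<lambda>A. Transposition.transpose x y ` A"])
     (auto simp: transpose_image_half_subsets assms image_image)

text \<open>All indices outside J play the same role (swap them by a transposition), and the signs of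
  a half subset sum to zero; this recursion determines all correlations of the signs.\<close>
lemma half_corr_extend:
  assumes "even d" "J \<subseteq> {..<d}" "e < d" "e \<notin> J"
  shows "(real d - real (card J)) * (\<Sum>A\<in>half_subsets d. (\<Prod>i\<in>J. sign_mem A i) * sign_mem A e)
       = - (\<Sum>j\<in>J. \<Sum>A\<in>half_subsets d. \<Prod>i\<in>J - {j}. sign_mem A i)"
proof -
  define T where "T j = (\<Sum>A\<in>half_subsets d. (\<Prod>i\<in>J. sign_mem A i) * sign_mem A j)" for j
  have fJ: "finite J" using assms(2) finite_subset by blast
  have T_other: "T j = T e" if "j < d" "j \<notin> J" for j
  proof -
    have "T j = (\<Sum>A\<in>half_subsets d. (\<Prod>i\<in>J. sign_mem (Transposition.transpose j e ` A) i)
                  * sign_mem (Transposition.transpose j e ` A) j)"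
      unfolding T_def by (rule sum_half_subsets_transpose[OF that(1) assms(3)])
    also have "\<dots> = T e"
    proof -
      have "Transposition.transpose j e i = i" if "i \<in> J" for i
        using that \<open>j \<notin> J\<close> assms(4) by (metis transpose_apply_other)
      thus ?thesis unfolding T_def sign_mem_transpose_image by simp
    qed
    finally show ?thesis .
  qed
  have T_in: "T j = (\<Sum>A\<in>half_subsets d. \<Prod>i\<in>J - {j}. sign_mem A i)" if "j \<in> J" for j
    unfolding T_def using that fJ by (intro sum.cong refl) (simp add: prod.remove mult_ac)
  have "0 = (\<Sum>A\<in>half_subsets d. (\<Prod>i\<in>J. sign_mem A i) * (\<Sum>j<d. sign_mem A j))"
    using sum_sign_mem_half_subset[OF assms(1)] by simp
  also have "\<dots> = (\<Sum>j<d. T j)"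
    unfolding T_def by (simp add: sum_distrib_left sum.swap[of _ "{..<d}"])
  also have "\<dots> = (\<Sum>j\<in>J. T j) + (\<Sum>j\<in>{..<d} - J. T j)"
    using assms(2) by (metis add.commute finite_lessThan sum.subset_diff)
  also have "(\<Sum>j\<in>{..<d} - J. T j) = (real d - real (card J)) * T e"
  proof -
    have "card J \<le> d" using card_mono[OF _ assms(2)] by simp
    thus ?thesis using assms(2) fJ by (simp add: T_other card_Diff_subset)
  qed
  finally show ?thesis using T_in by (simp add: T_def)
qed

lemma half_corr_pair:
  assumes "even d" "a < d" "b < d"
  shows "(\<Sum>A\<in>half_subsets d. sign_mem A a * sign_mem A b)
       = (if a = b then real (card (half_subsets d)) else - real (card (half_subsets d)) / (real d - 1))"
proof (cases "a = b")
  case False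
  have "real d - 1 > 0" using assms False by linarith
  with half_corr_extend[OF assms(1), of "{a}" b] assms False show ?thesis
    by (simp add: field_simps)
qed simp

lemma half_corr_quadruple:
  assumes "even d" "a < d" "b < d" "c < d" "e < d" "distinct [a, b, c, e]"
  shows "(\<Sum>A\<in>half_subsets d. sign_mem A a * sign_mem A b * sign_mem A c * sign_mem A e)
       = 3 * real (card (half_subsets d)) / ((real d - 1) * (real d - 3))"
proof -
  have "card {a, b, c, e} \<le> card {..<d}" using assms by (intro card_mono) auto
  hence pos: "real d - 1 > 0" "real d - 3 > 0" using assms(6) by auto
  have "(real d - 3) * (\<Sum>A\<in>half_subsets d. sign_mem A a * sign_mem A b * sign_mem A c * sign_mem A e)
      = 3 * real (card (half_subsets d)) / (real d - 1)"
    using half_corr_extend[OF assms(1), of "{a, b, c}" e] assms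
    by (simp add: half_corr_pair insert_Diff_if mult_ac)
  with pos show ?thesis by (simp add: eq_divide_eq mult.commute)
qed

lemma half_corr_coincident_le:
  assumes "even d" "0 < d" "y < d" "z < d"
  shows "\<bar>\<Sum>A\<in>half_subsets d. sign_mem A x * sign_mem A x * sign_mem A y * sign_mem A z\<bar>
       \<le> real (card (half_subsets d)) * (of_bool (y = z) + 1 / (real d - 1))"
proof -
  have "real d \<ge> 2" using two_le_even_pos assms(1,2) .
  moreover have "(\<Sum>A\<in>half_subsets d. sign_mem A x * sign_mem A x * sign_mem A y * sign_mem A z)
      = (\<Sum>A\<in>half_subsets d. sign_mem A y * sign_mem A z)"
    by (simp add: mult.assoc)
  ultimately show ?thesis using half_corr_pair[OF assms(1,3,4)] by (simp add: ring_distribs)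
qed

text \<open>The correlation of four signs, divided by the number of half subsets, is 1 when the indices
  pair up, at most 1/(d-1) in absolute value when otherwise two of them coincide, and
  3/((d-1)(d-3)) \<le> 16/d^2 when they are distinct; the weight dominates all three cases.\<close>
definition quartic_weight :: "nat \<Rightarrow> nat \<Rightarrow> nat \<Rightarrow> nat \<Rightarrow> nat \<Rightarrow> real" where
  "quartic_weight d a b c e =
     of_bool (a = b \<and> c = e) + of_bool (a = c \<and> b = e) + of_bool (a = e \<and> b = c)
     + (of_bool (a = b) + of_bool (a = c) + of_bool (a = e) + of_bool (b = c) + of_bool (b = e)
        + of_bool (c = e)) / (real d - 1)
     + 16 / (real d)\<^sup>2"

lemma quartic_weight_ge_coincident:
  assumes "real d \<ge> 2" and "x \<le> of_bool (a = b \<and> c = e) + of_bool (a = c \<and> b = e) + of_bool (a = e \<and> b = c)"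
    and "a = b \<or> a = c \<or> a = e \<or> b = c \<or> b = e \<or> c = e"
  shows "x + 1 / (real d - 1) \<le> quartic_weight d a b c e"
proof -
  have "1 \<le> of_bool (a = b) + of_bool (a = c) + of_bool (a = e) + of_bool (b = c) + of_bool (b = e)
        + (of_bool (c = e) :: real)"
    using assms(3) by auto
  hence "1 / (real d - 1) \<le> (of_bool (a = b) + of_bool (a = c) + of_bool (a = e) + of_bool (b = c)
        + of_bool (b = e) + of_bool (c = e)) / (real d - 1)"
    using assms(1) by (intro divide_right_mono) auto
  with assms(2) show ?thesis unfolding quartic_weight_def by (smt (verit) zero_le_divide_iff zero_le_power2)
qed

lemma quartic_weight_ge_const:
  assumes "real d \<ge> 2"
  shows "16 / (real d)\<^sup>2 \<le> quartic_weight d a b c e"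
proof -
  have "0 \<le> (of_bool (a = b) + of_bool (a = c) + of_bool (a = e) + of_bool (b = c)
        + of_bool (b = e) + of_bool (c = e)) / (real d - 1 :: real)"
    using assms by (intro divide_nonneg_nonneg) auto
  thus ?thesis unfolding quartic_weight_def by (smt (verit) zero_less_eq_of_bool)
qed

lemma three_div_le_sixteen_div_sq:
  assumes "4 \<le> x"
  shows "3 / ((x - 1) * (x - 3)) \<le> 16 / (x\<^sup>2 :: real)"
proof -
  have "3 * x\<^sup>2 \<le> 16 * ((x - 1) * (x - 3))"
    using mult_nonneg_nonneg[of "x - 4" "13 * x - 12"] assms by (simp add: power2_eq_square algebra_simps)
  moreover have "3 / X \<le> 16 / Y" if "3 * Y \<le> 16 * X" "0 < X" "0 < Y" for X Y :: real
    using that by (simp add: pos_divide_le_eq pos_le_divide_eq)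
  ultimately show ?thesis using assms by simp
qed

lemma half_corr_quadruple_le:
  assumes "even d" "0 < d" "a < d" "b < d" "c < d" "e < d"
  shows "\<bar>\<Sum>A\<in>half_subsets d. sign_mem A a * sign_mem A b * sign_mem A c * sign_mem A e\<bar>
       \<le> real (card (half_subsets d)) * quartic_weight d a b c e"
proof -
  define N where "N = real (card (half_subsets d))"
  define Q where "Q a b c e = (\<Sum>A\<in>half_subsets d. sign_mem A a * sign_mem A b * sign_mem A c * sign_mem A e)"
    for a b c e
  have d2: "real d \<ge> 2" using two_le_even_pos assms(1,2) .
  have coincident: "\<bar>Q a b c e\<bar> \<le> N * quartic_weight d a b c e"
    if "Q a b c e = Q x x y z" "y < d" "z < d"
      "(of_bool (y = z) :: real) \<le> of_bool (a = b \<and> c = e) + of_bool (a = c \<and> b = e) + of_bool (a = e \<and> b = c)"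
      "a = b \<or> a = c \<or> a = e \<or> b = c \<or> b = e \<or> c = e" for x y z
  proof -
    have "\<bar>Q x x y z\<bar> \<le> N * quartic_weight d a b c e"
      unfolding Q_def N_def
      by (rule order_trans[OF half_corr_coincident_le[OF assms(1,2) that(2,3)]
            mult_left_mono[OF quartic_weight_ge_coincident[OF d2 that(4,5)]]]) simp
    thus ?thesis using that(1) by simp
  qed
  consider "a = b" | "a = c" | "a = e" | "b = c" | "b = e" | "c = e" | "distinct [a, b, c, e]"
    by force
  hence "\<bar>Q a b c e\<bar> \<le> N * quartic_weight d a b c e"
  proof cases
    case distinct: 7
    have "card {a, b, c, e} \<le> card {..<d}" using assms by (intro card_mono) auto
    hence d4: "real d \<ge> 4" using distinct by simp
    have "3 / ((real d - 1) * (real d - 3)) \<le> quartic_weight d a b c e"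
      using three_div_le_sixteen_div_sq[OF d4] quartic_weight_ge_const[OF d2, of a b c e] by linarith
    hence "N * (3 / ((real d - 1) * (real d - 3))) \<le> N * quartic_weight d a b c e"
      by (intro mult_left_mono) (simp_all add: N_def)
    moreover have "Q a b c e = N * (3 / ((real d - 1) * (real d - 3)))"
      using half_corr_quadruple[OF assms(1,3-6) distinct] by (simp add: Q_def N_def)
    moreover have "0 \<le> N * (3 / ((real d - 1) * (real d - 3)))" using d4 by (simp add: N_def)
    ultimately show ?thesis by (simp only: abs_of_nonneg)
  qed (rule coincident[of a c e] coincident[of a b e] coincident[of a b c] coincident[of b a e]
           coincident[of b a c] coincident[of c a b];
       simp add: assms Q_def mult_ac)+
  thus ?thesis unfolding Q_def N_def .
qed

section \<open>Moments and anticoncentration\<close>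

lemma sum3_product:
  "(\<Sum>a\<in>A. \<Sum>b\<in>B. \<Sum>c\<in>C. f a * g b * h c) = sum f A * sum g B * (sum h C :: 'a :: comm_semiring_0)"
  by (simp only: sum_distrib_left[symmetric] sum_distrib_right[symmetric])

lemma if_zero_distribs:
  fixes x y :: "'a :: comm_semiring_0"
  shows "x * (if P then y else 0) = (if P then x * y else 0)"
    and "(if P \<and> Q then x else 0) = (if P then if Q then x else 0 else 0)"
    and "(\<Sum>i\<in>A. if P then f i else 0) = (if P then sum f A else 0)"
  by simp_all

text \<open>The summands are in the normal form of mult_ac, so that these equations apply as rewrite
  rules once one diagonal of a fourfold sum has been summed out.\<close>
lemma quartic_sum_shapes:
  fixes u :: "nat \<Rightarrow> real"
  shows "(\<Sum>a<d. \<Sum>b<d. \<Sum>c<d. u a * (u a * (u b * u c))) = (\<Sum>a<d. u a ^ 2) * (\<Sum>a<d. u a) ^ 2"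
    and "(\<Sum>a<d. \<Sum>b<d. \<Sum>c<d. u a * (u b * (u b * u c))) = (\<Sum>a<d. u a ^ 2) * (\<Sum>a<d. u a) ^ 2"
    and "(\<Sum>a<d. \<Sum>b<d. \<Sum>c<d. u a * (u b * (u c * u c))) = (\<Sum>a<d. u a ^ 2) * (\<Sum>a<d. u a) ^ 2"
    and "(\<Sum>a<d. \<Sum>b<d. u a * (u a * (u b * u b))) = (\<Sum>a<d. u a ^ 2) ^ 2"
  using sum3_product[where f = "\<lambda>a. u a ^ 2" and g = u and h = u]
    sum3_product[where f = u and g = "\<lambda>a. u a ^ 2" and h = u]
    sum3_product[where f = u and g = u and h = "\<lambda>a. u a ^ 2"]
    sum_product[where f = "\<lambda>a. u a ^ 2" and g = "\<lambda>a. u a ^ 2"]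
  by (simp_all add: power2_eq_square mult_ac)

lemma quartic_sum_diagonals:
  fixes u :: "nat \<Rightarrow> real" and d :: nat
  defines "s \<equiv> (\<Sum>a<d. u a)" and "q \<equiv> (\<Sum>a<d. u a ^ 2)"
  shows "(\<Sum>a<d. \<Sum>b<d. \<Sum>c<d. \<Sum>e<d. u a * u b * u c * u e * of_bool (a = b)) = q * s ^ 2"
    and "(\<Sum>a<d. \<Sum>b<d. \<Sum>c<d. \<Sum>e<d. u a * u b * u c * u e * of_bool (a = c)) = q * s ^ 2"
    and "(\<Sum>a<d. \<Sum>b<d. \<Sum>c<d. \<Sum>e<d. u a * u b * u c * u e * of_bool (a = e)) = q * s ^ 2"
    and "(\<Sum>a<d. \<Sum>b<d. \<Sum>c<d. \<Sum>e<d. u a * u b * u c * u e * of_bool (b = c)) = q * s ^ 2"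
    and "(\<Sum>a<d. \<Sum>b<d. \<Sum>c<d. \<Sum>e<d. u a * u b * u c * u e * of_bool (b = e)) = q * s ^ 2"
    and "(\<Sum>a<d. \<Sum>b<d. \<Sum>c<d. \<Sum>e<d. u a * u b * u c * u e * of_bool (c = e)) = q * s ^ 2"
    and "(\<Sum>a<d. \<Sum>b<d. \<Sum>c<d. \<Sum>e<d. u a * u b * u c * u e * of_bool (a = b \<and> c = e)) = q ^ 2"
    and "(\<Sum>a<d. \<Sum>b<d. \<Sum>c<d. \<Sum>e<d. u a * u b * u c * u e * of_bool (a = c \<and> b = e)) = q ^ 2"
    and "(\<Sum>a<d. \<Sum>b<d. \<Sum>c<d. \<Sum>e<d. u a * u b * u c * u e * of_bool (a = e \<and> b = c)) = q ^ 2"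
  unfolding s_def q_def of_bool_def
  by (simp_all add: if_zero_distribs cong: if_cong)
     (simp_all add: quartic_sum_shapes mult_ac)

lemma sum_quartic_weight:
  fixes u :: "nat \<Rightarrow> real"
  shows "(\<Sum>a<d. \<Sum>b<d. \<Sum>c<d. \<Sum>e<d. u a * u b * u c * u e * quartic_weight d a b c e)
       = 3 * (\<Sum>a<d. u a ^ 2)\<^sup>2 + 6 * ((\<Sum>a<d. u a ^ 2) * (\<Sum>a<d. u a)\<^sup>2) / (real d - 1)
         + 16 / (real d)\<^sup>2 * (\<Sum>a<d. u a) ^ 4"
proof -
  define P where "P a b c e = u a * u b * u c * u e" for a b c e
  have "P a b c e * quartic_weight d a b c e =
      P a b c e * of_bool (a = b \<and> c = e) + P a b c e * of_bool (a = c \<and> b = e)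
      + P a b c e * of_bool (a = e \<and> b = c)
      + (P a b c e * of_bool (a = b) + P a b c e * of_bool (a = c) + P a b c e * of_bool (a = e)
         + P a b c e * of_bool (b = c) + P a b c e * of_bool (b = e) + P a b c e * of_bool (c = e))
        / (real d - 1)
      + 16 / (real d)\<^sup>2 * P a b c e" for a b c e
    unfolding quartic_weight_def by (simp only: ring_distribs times_divide_eq_right mult.commute)
  moreover have "(\<Sum>a<d. \<Sum>b<d. \<Sum>c<d. \<Sum>e<d. P a b c e) = (\<Sum>a<d. u a) ^ 4"
    unfolding P_def by (simp add: eval_nat_numeral sum_distrib_left sum_distrib_right mult_ac)
  ultimately show ?thesis
    unfolding P_def[symmetric]
    by (simp only: sum.distrib sum_divide_distrib[symmetric] sum_distrib_left[symmetric],
        simp only: P_def quartic_sum_diagonals) simp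
qed

lemma quartic_moment_arith:
  fixes q s x :: real
  assumes "2 \<le> x" "0 \<le> q" "s\<^sup>2 \<le> x * q"
  shows "3 * q\<^sup>2 + 6 * (q * s\<^sup>2) / (x - 1) + 16 / x\<^sup>2 * s ^ 4 \<le> 31 * q\<^sup>2"
proof -
  have "6 * (q * s\<^sup>2) / (x - 1) \<le> 6 * (q * (x * q)) / (x - 1)"
    using assms by (intro divide_right_mono mult_left_mono) auto
  also have "\<dots> \<le> 12 * q\<^sup>2"
    using assms(1,2) mult_left_mono[of 2 x "q * q"] by (simp add: field_simps power2_eq_square)
  finally have "6 * (q * s\<^sup>2) / (x - 1) \<le> 12 * q\<^sup>2" .
  moreover have "16 / x\<^sup>2 * s ^ 4 \<le> 16 * q\<^sup>2"
  proof -
    have "s ^ 4 \<le> (x * q)\<^sup>2"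
      using power_mono[OF assms(3), of 2] by (simp add: power_mult[symmetric])
    thus ?thesis using assms(1) by (simp add: field_simps)
  qed
  ultimately show ?thesis by linarith
qed

lemma half_moment4_le:
  assumes "even d" "0 < d"
  shows "(\<Sum>A\<in>half_subsets d. (\<Sum>j<d. x j * sign_mem A j) ^ 4)
       \<le> 31 * real (card (half_subsets d)) * (\<Sum>j<d. (x j)\<^sup>2)\<^sup>2"
proof -
  define N where "N = real (card (half_subsets d))"
  define u where "u j = \<bar>x j\<bar>" for j
  define q where "q = (\<Sum>j<d. (u j)\<^sup>2)"
  define s where "s = (\<Sum>j<d. u j)"
  have d2: "real d \<ge> 2" using two_le_even_pos assms .
  have "(\<Sum>A\<in>half_subsets d. (\<Sum>j<d. x j * sign_mem A j) ^ 4)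
      = (\<Sum>a<d. \<Sum>b<d. \<Sum>c<d. \<Sum>e<d. (x a * x b * x c * x e) *
           (\<Sum>A\<in>half_subsets d. sign_mem A a * sign_mem A b * sign_mem A c * sign_mem A e))"
    by (simp add: eval_nat_numeral sum_distrib_left sum_distrib_right sum.swap[of _ "half_subsets d"]
        mult_ac)
  also have "\<dots> \<le> (\<Sum>a<d. \<Sum>b<d. \<Sum>c<d. \<Sum>e<d. u a * u b * u c * u e * (N * quartic_weight d a b c e))"
  proof (intro sum_mono)
    fix a b c e assume "a \<in> {..<d}" "b \<in> {..<d}" "c \<in> {..<d}" "e \<in> {..<d}"
    hence "\<bar>\<Sum>A\<in>half_subsets d. sign_mem A a * sign_mem A b * sign_mem A c * sign_mem A e\<bar>
        \<le> N * quartic_weight d a b c e"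
      using half_corr_quadruple_le[OF assms] unfolding N_def by simp
    from mult_left_mono[OF this, of "\<bar>x a * x b * x c * x e\<bar>"]
    show "(x a * x b * x c * x e) *
        (\<Sum>A\<in>half_subsets d. sign_mem A a * sign_mem A b * sign_mem A c * sign_mem A e)
        \<le> u a * u b * u c * u e * (N * quartic_weight d a b c e)"
      unfolding u_def abs_mult[symmetric] by (smt (verit) abs_ge_self abs_mult)
  qed
  also have "\<dots> = N * (\<Sum>a<d. \<Sum>b<d. \<Sum>c<d. \<Sum>e<d. u a * u b * u c * u e * quartic_weight d a b c e)"
    by (simp add: sum_distrib_left mult_ac)
  also have "\<dots> = N * (3 * q\<^sup>2 + 6 * (q * s\<^sup>2) / (real d - 1) + 16 / (real d)\<^sup>2 * s ^ 4)"
    by (simp only: sum_quartic_weight q_def s_def)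
  also have "\<dots> \<le> N * (31 * q\<^sup>2)"
  proof (intro mult_left_mono quartic_moment_arith[OF d2])
    show "s\<^sup>2 \<le> real d * q"
      using Cauchy_Schwarz_ineq_sum[of "\<lambda>_. 1" u "{..<d}"] by (simp add: s_def q_def)
  qed (simp_all add: q_def N_def sum_nonneg)
  finally show ?thesis by (simp add: N_def q_def u_def mult_ac)
qed

lemma half_moment2_ge:
  assumes "even d" "0 < d" "(\<Sum>j<d. x j) = 0"
  shows "(\<Sum>A\<in>half_subsets d. (\<Sum>j<d. x j * sign_mem A j)\<^sup>2)
       \<ge> real (card (half_subsets d)) * (\<Sum>j<d. (x j)\<^sup>2)"
proof -
  define N where "N = real (card (half_subsets d))"
  define K where "K = N / (real d - 1)"
  have d2: "real d \<ge> 2" using two_le_even_pos assms(1,2) .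
  have "(\<Sum>A\<in>half_subsets d. (\<Sum>j<d. x j * sign_mem A j)\<^sup>2)
      = (\<Sum>a<d. \<Sum>b<d. x a * x b * (\<Sum>A\<in>half_subsets d. sign_mem A a * sign_mem A b))"
    by (simp add: power2_eq_square sum_distrib_left sum_distrib_right sum.swap[of _ "half_subsets d"]
        mult_ac)
  also have "\<dots> = (\<Sum>a<d. \<Sum>b<d. (N + K) * (x a * x b * of_bool (a = b)) - K * (x a * x b))"
    by (intro sum.cong refl) (simp add: half_corr_pair[OF assms(1)] N_def K_def algebra_simps)
  also have "\<dots> = (N + K) * (\<Sum>a<d. (x a)\<^sup>2) - K * (\<Sum>a<d. x a)\<^sup>2"
    by (simp add: sum_subtractf sum_distrib_left[symmetric] power2_eq_square sum_product)
  moreover have "0 \<le> K * (\<Sum>a<d. (x a)\<^sup>2)"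
    using d2 by (simp add: K_def N_def sum_nonneg)
  ultimately show ?thesis
    using assms(3) by (simp add: N_def[symmetric] ring_distribs)
qed

text \<open>A counting form of the Paley--Zygmund inequality.\<close>
lemma card_sq_ge_half_mean:
  fixes Y :: "'a \<Rightarrow> real"
  assumes "finite H" "1 \<le> c" "0 \<le> q"
    and moment2: "real (card H) * q \<le> (\<Sum>A\<in>H. (Y A)\<^sup>2)"
    and moment4: "(\<Sum>A\<in>H. (Y A) ^ 4) \<le> c * real (card H) * q\<^sup>2"
  shows "real (card H) \<le> 4 * c * real (card {A \<in> H. q / 2 \<le> (Y A)\<^sup>2})"
proof (cases "q = 0")
  case True
  thus ?thesis using assms(2) mult_right_mono[of 1 "4 * c" "real (card H)"] by simp
next
  case False
  define N where "N = real (card H)"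
  define Good where "Good = {A \<in> H. q / 2 \<le> (Y A)\<^sup>2}"
  have q_pos: "0 < q" using False assms(3) by simp
  have GH: "Good \<subseteq> H" "finite Good" using assms(1) by (auto simp: Good_def)
  have amgm: "z \<le> z\<^sup>2 / (4 * c * q) + c * q" for z
  proof -
    have "0 \<le> (z - 2 * c * q)\<^sup>2" by simp
    thus ?thesis using q_pos assms(2) by (simp add: field_simps power2_eq_square)
  qed
  have "N * q \<le> (\<Sum>A\<in>Good. (Y A)\<^sup>2) + (\<Sum>A\<in>H - Good. (Y A)\<^sup>2)"
    using moment2 GH assms(1) by (metis N_def add.commute sum.subset_diff)
  also have "(\<Sum>A\<in>H - Good. (Y A)\<^sup>2) \<le> (\<Sum>A\<in>H - Good. q / 2)"
    by (intro sum_mono) (auto simp: Good_def)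
  also have "\<dots> \<le> N * (q / 2)"
    using q_pos assms(1) GH by (simp add: N_def card_Diff_subset mult_right_mono)
  also have "(\<Sum>A\<in>Good. (Y A)\<^sup>2) \<le> (\<Sum>A\<in>Good. ((Y A)\<^sup>2)\<^sup>2 / (4 * c * q) + c * q)"
    by (intro sum_mono amgm)
  also have "\<dots> \<le> (\<Sum>A\<in>H. (Y A) ^ 4) / (4 * c * q) + real (card Good) * (c * q)"
  proof -
    have "(\<Sum>A\<in>Good. (Y A) ^ 4) \<le> (\<Sum>A\<in>H. (Y A) ^ 4)"
      using GH assms(1) by (intro sum_mono2) auto
    thus ?thesis using q_pos assms(2)
      by (simp add: sum.distrib sum_divide_distrib[symmetric] power_mult[symmetric] divide_right_mono)
  qed
  also have "(\<Sum>A\<in>H. (Y A) ^ 4) / (4 * c * q) \<le> c * N * q\<^sup>2 / (4 * c * q)"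
    using moment4 q_pos assms(2) by (intro divide_right_mono) (simp_all add: N_def)
  also have "c * N * q\<^sup>2 / (4 * c * q) = N * q / 4"
    using q_pos assms(2) by (simp add: power2_eq_square)
  finally have "N * q \<le> 4 * c * real (card Good) * q" by (simp add: algebra_simps)
  thus ?thesis using q_pos by (simp add: N_def Good_def)
qed

lemma half_anticoncentration:
  assumes "even d" "0 < d" "(\<Sum>j<d. x j) = 0"
  shows "real (card (half_subsets d))
       \<le> 124 * real (card {A \<in> half_subsets d. (\<Sum>j<d. (x j)\<^sup>2) / 2 \<le> (\<Sum>j<d. x j * sign_mem A j)\<^sup>2})"
  using card_sq_ge_half_mean[OF finite_half_subsets _ _ half_moment2_ge[OF assms] half_moment4_le[OF assms(1,2)]]
  by (simp add: sum_nonneg)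

lemma prob_exists_correlated_group:
  assumes "even d" "0 < d" "(\<Sum>j<d. x j) = 0"
  shows "1 - (123 / 124) ^ G
       \<le> measure_pmf.prob (public_rand d G)
            {S. \<exists>g<G. (\<Sum>j<d. (x j)\<^sup>2) / 2 \<le> (\<Sum>j<d. x j * sign_mem (S g) j)\<^sup>2}"
proof -
  define H where "H = half_subsets d"
  define Good where "Good = {A. (\<Sum>j<d. (x j)\<^sup>2) / 2 \<le> (\<Sum>j<d. x j * sign_mem A j)\<^sup>2}"
  define E where "E = {S. \<exists>g<G. (\<Sum>j<d. (x j)\<^sup>2) / 2 \<le> (\<Sum>j<d. x j * sign_mem (S g) j)\<^sup>2}"
  have H: "finite H" "H \<noteq> {}" by (simp_all add: H_def finite_half_subsets half_subsets_nonempty)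
  have "1 / 124 \<le> measure_pmf.prob (pmf_of_set H) Good"
    using half_anticoncentration[OF assms] H
    by (simp add: measure_pmf_of_set H_def Good_def Int_def card_gt_0_iff field_simps conj_commute)
  hence "measure_pmf.prob (pmf_of_set H) (- Good) \<le> 123 / 124"
    using measure_pmf.prob_compl[of Good "pmf_of_set H"] by (simp add: Compl_eq_Diff_UNIV)
  moreover have "measure_pmf.prob (public_rand d G) (- E) = measure_pmf.prob (pmf_of_set H) (- Good) ^ G"
  proof -
    have "- E = Pi {..<G} (\<lambda>_. - Good)" by (auto simp: E_def Good_def Pi_def)
    thus ?thesis by (simp add: public_rand_def H_def half_subsets_def measure_Pi_pmf_Pi)
  qed
  ultimately have "measure_pmf.prob (public_rand d G) (- E) \<le> (123 / 124) ^ G"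
    by (simp add: power_mono)
  thus ?thesis
    using measure_pmf.prob_compl[of E "public_rand d G"] by (simp add: E_def Compl_eq_Diff_UNIV)
qed

section \<open>Honest messages\<close>

lemma rr_scale_pos: "0 < \<epsilon> \<Longrightarrow> 0 < rr_scale \<epsilon>"
  unfolding rr_scale_def by (simp add: add_pos_pos)

lemma set_pmf_RR: "set_pmf (RR \<epsilon> b) \<subseteq> {b * rr_scale \<epsilon>, - b * rr_scale \<epsilon>}"
  unfolding RR_def by auto

lemma expectation_RR:
  assumes "0 < \<epsilon>"
  shows "measure_pmf.expectation (RR \<epsilon> b) (\<lambda>y. y) = b"
proof -
  define e where "e = exp \<epsilon>"
  have e1: "e > 1" using assms by (simp add: e_def)
  have "measure_pmf.expectation (RR \<epsilon> b) (\<lambda>y. y)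
      = b * rr_scale \<epsilon> * (e / (e + 1)) + - b * rr_scale \<epsilon> * (1 - e / (e + 1))"
    unfolding RR_def e_def[symmetric] using e1 by (simp add: field_simps)
  also have "\<dots> = b * rr_scale \<epsilon> * (2 * (e / (e + 1)) - 1)" by (simp add: algebra_simps)
  also have "2 * (e / (e + 1)) - 1 = (e - 1) / (e + 1)" using e1 by (simp add: field_simps)
  also have "b * rr_scale \<epsilon> * ((e - 1) / (e + 1)) = b"
    using e1 unfolding rr_scale_def e_def[symmetric] by simp
  finally show ?thesis .
qed

lemma set_pmf_raptor_client: "set_pmf (raptor_client n G \<epsilon> S i x) \<subseteq> {rr_scale \<epsilon>, - rr_scale \<epsilon>}"
  unfolding raptor_client_def using set_pmf_RR by fastforce

lemma set_pmf_uniform_dist: "0 < d \<Longrightarrow> set_pmf (uniform_dist d) = {..<d}"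
  by (simp add: uniform_dist_def lessThan_empty_iff)

lemma pmf_uniform_dist: "j < d \<Longrightarrow> pmf (uniform_dist d) j = 1 / real d"
  by (simp add: uniform_dist_def lessThan_empty_iff)

lemma l1_to_uniform_eq: "l1_to_uniform d P = (\<Sum>j<d. \<bar>pmf P j - 1 / real d\<bar>)"
  by (simp add: l1_to_uniform_def pmf_uniform_dist)

text \<open>For A \<in> half_subsets d this is P(A) - P(-A), the mean of an honest message in a group with
  public set A; the centring at 1/d makes it vanish for the uniform distribution.\<close>
definition set_bias :: "nat pmf \<Rightarrow> nat \<Rightarrow> nat set \<Rightarrow> real" where
  "set_bias P d A = (\<Sum>a<d. (pmf P a - 1 / real d) * sign_mem A a)"

lemma expectation_raptor_client:
  assumes "0 < \<epsilon>" "set_pmf P \<subseteq> {..<d}" "even d" "S (group_of n G i) \<in> half_subsets d"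
  shows "measure_pmf.expectation (bind_pmf P (raptor_client n G \<epsilon> S i)) (\<lambda>y. y)
       = set_bias P d (S (group_of n G i))"
proof -
  define A where "A = S (group_of n G i)"
  have "measure_pmf.expectation (bind_pmf P (raptor_client n G \<epsilon> S i)) (\<lambda>y. y)
      = (\<Sum>a<d. pmf P a * measure_pmf.expectation (raptor_client n G \<epsilon> S i a) (\<lambda>y. y))"
    using assms(2) finite_subset[OF set_pmf_raptor_client]
    by (subst pmf_expectation_bind[of "{..<d}"]) auto
  also have "\<dots> = (\<Sum>a<d. pmf P a * sign_mem A a)"
    by (simp add: raptor_client_def expectation_RR[OF assms(1)] sign_mem_def A_def)
  also have "\<dots> = set_bias P d A + (\<Sum>a<d. sign_mem A a) / real d"
    by (simp add: set_bias_def algebra_simps sum_subtractf sum_divide_distrib)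
  finally show ?thesis using sum_sign_mem_half_subset[OF assms(3,4)] by (simp add: A_def)
qed

lemma group_users_subset: "G dvd n \<Longrightarrow> g < G \<Longrightarrow> group_users n G g \<subseteq> {..<n}"
proof -
  assume "G dvd n" "g < G"
  hence "Suc g * (n div G) \<le> G * (n div G)" by (intro mult_right_mono) auto
  thus ?thesis using \<open>G dvd n\<close> by (auto simp: group_users_def)
qed

lemma card_group_users: "card (group_users n G g) = n div G"
  by (simp add: group_users_def)

lemma group_of_group_users: "i \<in> group_users n G g \<Longrightarrow> group_of n G i = g"
  unfolding group_users_def group_of_def by (auto intro: div_nat_eqI simp: mult.commute)

lemma public_rand_half_subsets:
  assumes "S \<in> set_pmf (public_rand d G)" "g < G"
  shows "S g \<in> half_subsets d"
proof -
  have "S g \<in> set_pmf (pmf_of_set (half_subsets d))"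
    using assms unfolding public_rand_def half_subsets_def by (auto simp: set_Pi_pmf PiE_dflt_def)
  thus ?thesis by (simp add: set_pmf_of_set[OF half_subsets_nonempty finite_half_subsets])
qed

definition honest_msgs :: "nat \<Rightarrow> nat \<Rightarrow> real \<Rightarrow> nat pmf \<Rightarrow> (nat \<Rightarrow> nat set) \<Rightarrow> (nat \<Rightarrow> real) pmf" where
  "honest_msgs n G \<epsilon> P S = Pi_pmf {..<n} 0 (\<lambda>i. bind_pmf P (raptor_client n G \<epsilon> S i))"

lemma expectation_Pi_pmf_component:
  fixes D :: "'a \<Rightarrow> real pmf"
  assumes "finite A" "i \<in> A"
  shows "measure_pmf.expectation (Pi_pmf A dflt D) (\<lambda>f. f i) = measure_pmf.expectation (D i) (\<lambda>y. y)"
proof -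
  have "map_pmf (\<lambda>f. f i) (Pi_pmf A dflt D) = D i"
    using assms by (subst Pi_pmf_component) auto
  from arg_cong[OF this, of "\<lambda>p. measure_pmf.expectation p (\<lambda>y. y)"] show ?thesis by simp
qed

lemma prob_Pi_pmf_sum_deviation:
  fixes D :: "nat \<Rightarrow> real pmf"
  assumes "I \<subseteq> {..<n}" "I \<noteq> {}" "0 < r" "\<And>i. i \<in> I \<Longrightarrow> set_pmf (D i) \<subseteq> {r, -r}" "0 \<le> t"
  shows "measure_pmf.prob (Pi_pmf {..<n} 0 D)
           {f. t \<le> \<bar>(\<Sum>i\<in>I. f i) - (\<Sum>i\<in>I. measure_pmf.expectation (D i) (\<lambda>y. y))\<bar>}
         \<le> 2 * exp (- 2 * t\<^sup>2 / (real (card I) * (2 * r)\<^sup>2))"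
proof -
  define M where "M = measure_pmf (Pi_pmf {..<n} 0 D)"
  have fI: "finite I" using assms(1) finite_subset by blast
  have "prob_space.indep_vars M (\<lambda>_. count_space UNIV) (\<lambda>i f. f i) {..<n}"
    unfolding M_def by (rule indep_vars_Pi_pmf) simp
  hence "prob_space.indep_vars M (\<lambda>_. count_space UNIV) (\<lambda>i f. f i) I"
    using assms(1) prob_space.indep_vars_subset measure_pmf.prob_space_axioms unfolding M_def by blast
  hence indep: "prob_space.indep_vars M (\<lambda>_. borel) (\<lambda>i f. f i) I"
    unfolding M_def
    by (rule prob_space.indep_vars_compose2[OF measure_pmf.prob_space_axioms, where Y = "\<lambda>_ z. z"]) simp
  have bounded: "AE f in M. f i \<in> {- r..r}" if "i \<in> I" for i
    unfolding M_def
  proof (rule AE_pmfI)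
    fix f assume "f \<in> set_pmf (Pi_pmf {..<n} 0 D)"
    hence "f i \<in> set_pmf (D i)" using that assms(1) by (auto simp: set_Pi_pmf PiE_dflt_def)
    thus "f i \<in> {- r..r}" using assms(3) assms(4)[OF that] by auto
  qed
  have "indep_interval_bounded_random_variables M I (\<lambda>i f. f i) (\<lambda>_. - r) (\<lambda>_. r)"
    unfolding indep_interval_bounded_random_variables_def
      indep_interval_bounded_random_variables_axioms_def
    using fI indep bounded by (simp add: M_def measure_pmf.prob_space_axioms)
  then interpret Hoeffding_ineq M I "\<lambda>i f. f i" "\<lambda>_. - r" "\<lambda>_. r"
    "\<Sum>i\<in>I. measure_pmf.expectation (Pi_pmf {..<n} 0 D) (\<lambda>f. f i)"
    unfolding Hoeffding_ineq_def M_def by simp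
  have "prob {f \<in> space M. t \<le> \<bar>(\<Sum>i\<in>I. f i) - (\<Sum>i\<in>I. measure_pmf.expectation (Pi_pmf {..<n} 0 D) (\<lambda>f. f i))\<bar>}
        \<le> 2 * exp (- 2 * t\<^sup>2 / (\<Sum>i\<in>I. (r - - r)\<^sup>2))"
    by (rule Hoeffding_ineq_abs_ge) (use assms fI in \<open>auto simp: card_gt_0_iff\<close>)
  moreover have "(\<Sum>i\<in>I. measure_pmf.expectation (Pi_pmf {..<n} 0 D) (\<lambda>f. f i))
      = (\<Sum>i\<in>I. measure_pmf.expectation (D i) (\<lambda>y. y))"
    using assms(1) by (intro sum.cong refl expectation_Pi_pmf_component) auto
  ultimately show ?thesis unfolding M_def by simp
qed

lemma group_size_scale: "0 < G \<Longrightarrow> G dvd n \<Longrightarrow> 0 < n \<Longrightarrow> real G / real n * real (n div G) = 1"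
  by (elim dvdE) auto

lemma le_abs_rescale_iff:
  fixes t k c z b :: real
  assumes "t * k = 1" "0 < k"
  shows "c \<le> \<bar>t * z - b\<bar> \<longleftrightarrow> k * c \<le> \<bar>z - k * b\<bar>"
proof -
  have "k * \<bar>t * z - b\<bar> = \<bar>k * (t * z - b)\<bar>" using assms(2) by (simp add: abs_mult)
  also have "k * (t * z - b) = (t * k) * z - k * b" by (simp add: algebra_simps)
  finally have "k * \<bar>t * z - b\<bar> = \<bar>z - k * b\<bar>" using assms(1) by simp
  with mult_le_cancel_left_pos[OF assms(2), of c "\<bar>t * z - b\<bar>"] show ?thesis by (simp only:)
qed

definition noise_bound :: "nat \<Rightarrow> nat \<Rightarrow> real \<Rightarrow> real \<Rightarrow> real" where
  "noise_bound n G \<epsilon> \<beta> = rr_scale \<epsilon> * sqrt (6 * real G / real n * ln (4 * real G / \<beta>))"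

definition concentrated ::
    "nat \<Rightarrow> nat \<Rightarrow> real \<Rightarrow> real \<Rightarrow> nat pmf \<Rightarrow> nat \<Rightarrow> (nat \<Rightarrow> nat set) \<Rightarrow> (nat \<Rightarrow> real) \<Rightarrow> bool" where
  "concentrated n G \<epsilon> \<beta> P d S y \<longleftrightarrow>
     (\<forall>g<G. \<bar>real G / real n * (\<Sum>i\<in>group_users n G g. y i) - set_bias P d (S g)\<bar> < noise_bound n G \<epsilon> \<beta>)"

lemma prob_group_deviation_le:
  assumes "0 < G" "G dvd n" "0 < n" "0 < \<epsilon>" "0 < \<beta>" "\<beta> < 1" "even d" "set_pmf P \<subseteq> {..<d}"
    and S: "S \<in> set_pmf (public_rand d G)" and g: "g < G"
  shows "measure_pmf.prob (honest_msgs n G \<epsilon> P S)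
           {y. noise_bound n G \<epsilon> \<beta> \<le> \<bar>real G / real n * (\<Sum>i\<in>group_users n G g. y i) - set_bias P d (S g)\<bar>}
         \<le> \<beta> / (2 * real G)"
proof -
  define k where "k = n div G"
  define r where "r = rr_scale \<epsilon>"
  define L where "L = ln (4 * real G / \<beta>)"
  define U where "U = group_users n G g"
  define D where "D i = bind_pmf P (raptor_client n G \<epsilon> S i)" for i
  have k: "real G / real n * real k = 1" unfolding k_def by (rule group_size_scale[OF assms(1-3)])
  hence k0: "0 < k" by (cases k) auto
  have r0: "0 < r" using rr_scale_pos assms(4) by (simp add: r_def)
  have L0: "0 \<le> L" unfolding L_def using assms(1,5,6) by (intro ln_ge_zero) (simp add: field_simps)
  have U: "U \<subseteq> {..<n}" "card U = k"
    using group_users_subset[OF assms(2) g] by (simp_all add: U_def k_def card_group_users)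
  hence U_ne: "U \<noteq> {}" using k0 by auto
  have D_vals: "set_pmf (D i) \<subseteq> {r, - r}" for i
    using set_pmf_raptor_client by (fastforce simp: D_def r_def)
  have nb0: "0 \<le> noise_bound n G \<epsilon> \<beta>"
    using r0 L0 by (simp add: noise_bound_def r_def L_def[symmetric])
  have mean: "(\<Sum>i\<in>U. measure_pmf.expectation (D i) (\<lambda>y. y)) = real k * set_bias P d (S g)"
    using expectation_raptor_client[OF assms(4,8,7)] group_of_group_users public_rand_half_subsets[OF S g]
    by (simp add: D_def U_def card_group_users k_def)
  have "{y. noise_bound n G \<epsilon> \<beta> \<le> \<bar>real G / real n * (\<Sum>i\<in>U. y i) - set_bias P d (S g)\<bar>}
      = {y. real k * noise_bound n G \<epsilon> \<beta> \<le> \<bar>(\<Sum>i\<in>U. y i) - (\<Sum>i\<in>U. measure_pmf.expectation (D i) (\<lambda>y. y))\<bar>}"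
    using le_abs_rescale_iff[OF k] k0 unfolding mean by simp
  also have "measure_pmf.prob (honest_msgs n G \<epsilon> P S) \<dots>
      \<le> 2 * exp (- 2 * (real k * noise_bound n G \<epsilon> \<beta>)\<^sup>2 / (real k * (2 * r)\<^sup>2))"
    unfolding honest_msgs_def D_def[symmetric] U(2)[symmetric]
    by (rule prob_Pi_pmf_sum_deviation[OF U(1) U_ne r0 D_vals]) (simp add: nb0)
  also have "- 2 * (real k * noise_bound n G \<epsilon> \<beta>)\<^sup>2 / (real k * (2 * r)\<^sup>2) = - 3 * L"
    using k k0 r0 L0 by (simp add: noise_bound_def r_def L_def power2_eq_square field_simps)
  also have "2 * exp (- 3 * L) \<le> 2 * exp (- L)" using L0 by simp
  also have "exp (- L) = \<beta> / (4 * real G)" using assms(1,5) by (simp add: L_def exp_minus)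
  finally show ?thesis by (simp add: U_def)
qed

lemma prob_concentrated:
  assumes "0 < G" "G dvd n" "0 < n" "0 < \<epsilon>" "0 < \<beta>" "\<beta> < 1" "even d" "set_pmf P \<subseteq> {..<d}"
    "S \<in> set_pmf (public_rand d G)"
  shows "1 - \<beta> / 2 \<le> measure_pmf.prob (honest_msgs n G \<epsilon> P S) {y. concentrated n G \<epsilon> \<beta> P d S y}"
proof -
  define Dev where "Dev g = {y. noise_bound n G \<epsilon> \<beta>
      \<le> \<bar>real G / real n * (\<Sum>i\<in>group_users n G g. y i) - set_bias P d (S g)\<bar>}" for g
  have "{y. \<not> concentrated n G \<epsilon> \<beta> P d S y} = (\<Union>g<G. Dev g)"
    by (auto simp: concentrated_def Dev_def not_less)
  hence "measure_pmf.prob (honest_msgs n G \<epsilon> P S) {y. \<not> concentrated n G \<epsilon> \<beta> P d S y}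
      \<le> (\<Sum>g<G. measure_pmf.prob (honest_msgs n G \<epsilon> P S) (Dev g))"
    by (simp add: measure_pmf.finite_measure_subadditive_finite)
  also have "\<dots> \<le> (\<Sum>g<G. \<beta> / (2 * real G))"
    by (intro sum_mono) (use prob_group_deviation_le[OF assms] in \<open>simp add: Dev_def\<close>)
  also have "\<dots> = \<beta> / 2" using assms(1) by simp
  finally show ?thesis
    using measure_pmf.prob_compl[of "{y. concentrated n G \<epsilon> \<beta> P d S y}" "honest_msgs n G \<epsilon> P S"]
    by (simp add: Compl_eq_Diff_UNIV[symmetric] Collect_neg_eq)
qed

section \<open>Decisions of the aggregator\<close>

lemma sum_override_deviation_le:
  assumes "finite I" "finite C" "0 \<le> b" "\<And>i. i \<in> I \<inter> C \<Longrightarrow> \<bar>ya i - y i\<bar> \<le> b"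
  shows "\<bar>(\<Sum>i\<in>I. if i \<in> C then ya i else y i) - (\<Sum>i\<in>I. y i)\<bar> \<le> b * real (card C)"
proof -
  have "(\<Sum>i\<in>I. if i \<in> C then ya i else y i) - (\<Sum>i\<in>I. y i) = (\<Sum>i\<in>I \<inter> C. ya i - y i)"
  proof -
    have "(\<Sum>i\<in>I. if i \<in> C then ya i else y i) = (\<Sum>i\<in>I. y i + (if i \<in> C then ya i - y i else 0))"
      by (rule sum.cong) auto
    thus ?thesis using sum.inter_restrict[OF assms(1), of "\<lambda>i. ya i - y i" C] by (simp add: sum.distrib)
  qed
  also have "\<bar>\<dots>\<bar> \<le> (\<Sum>i\<in>I \<inter> C. b)" using assms(4) by (intro order_trans[OF sum_abs] sum_mono)
  also have "\<dots> \<le> b * real (card C)"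
    using card_mono[OF assms(2) Int_lower2, of I] assms(3) by (simp add: mult_left_mono mult.commute)
  finally show ?thesis .
qed

lemma raptor_alpha_eq:
  "raptor_alpha n G \<epsilon> m \<beta> = noise_bound n G \<epsilon> \<beta> + 2 * rr_scale \<epsilon> * real m * real G / real n"
  unfolding raptor_alpha_def noise_bound_def by (simp add: algebra_simps)

lemma group_statistic_close:
  assumes "0 < G" "G dvd n" "0 < n" "0 < \<epsilon>" "g < G" "concentrated n G \<epsilon> \<beta> P d S y"
    "C \<subseteq> {..<n}" "card C = m" "\<forall>i\<in>C. ya i \<in> {rr_scale \<epsilon>, - rr_scale \<epsilon>}"
    "\<forall>i<n. y i \<in> {rr_scale \<epsilon>, - rr_scale \<epsilon>}"
  shows "\<bar>real G / real n * (\<Sum>i\<in>group_users n G g. if i \<in> C then ya i else y i) - set_bias P d (S g)\<bar>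
       < raptor_alpha n G \<epsilon> m \<beta>"
proof -
  define U where "U = group_users n G g"
  define t where "t = real G / real n"
  have t0: "0 < t" using assms(1,3) by (simp add: t_def)
  have U: "U \<subseteq> {..<n}" using group_users_subset[OF assms(2,5)] by (simp add: U_def)
  have "\<bar>ya i - y i\<bar> \<le> 2 * rr_scale \<epsilon>" if "i \<in> U \<inter> C" for i
    using that U assms(9,10) rr_scale_pos[OF assms(4)] by fastforce
  hence "\<bar>(\<Sum>i\<in>U. if i \<in> C then ya i else y i) - (\<Sum>i\<in>U. y i)\<bar> \<le> 2 * rr_scale \<epsilon> * real m"
    using sum_override_deviation_le[of U C "2 * rr_scale \<epsilon>" ya y] rr_scale_pos[OF assms(4)]
      finite_subset[OF U] finite_subset[OF assms(7)] assms(8) by simp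
  hence "\<bar>t * (\<Sum>i\<in>U. if i \<in> C then ya i else y i) - t * (\<Sum>i\<in>U. y i)\<bar> \<le> 2 * rr_scale \<epsilon> * real m * t"
    using t0 by (simp add: right_diff_distrib[symmetric] abs_mult mult.commute)
  moreover have "\<bar>t * (\<Sum>i\<in>U. y i) - set_bias P d (S g)\<bar> < noise_bound n G \<epsilon> \<beta>"
    using assms(5,6) by (simp add: concentrated_def t_def U_def)
  moreover have "2 * rr_scale \<epsilon> * real m * t = 2 * rr_scale \<epsilon> * real m * real G / real n"
    by (simp add: t_def)
  moreover have "\<bar>x - z\<bar> < c + e" if "\<bar>x - y\<bar> \<le> e" "\<bar>y - z\<bar> < c" for x y z c e :: real
    using that by arith
  ultimately show ?thesis unfolding raptor_alpha_eq U_def[symmetric] t_def[symmetric] by metis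
qed

lemma raptor_aggregate_Uniform:
  assumes "0 < G" "G dvd n" "0 < n" "0 < \<epsilon>" "concentrated n G \<epsilon> \<beta> P d S y" "\<forall>g<G. set_bias P d (S g) = 0"
    "C \<subseteq> {..<n}" "card C = m" "\<forall>i\<in>C. ya i \<in> {rr_scale \<epsilon>, - rr_scale \<epsilon>}"
    "\<forall>i<n. y i \<in> {rr_scale \<epsilon>, - rr_scale \<epsilon>}"
  shows "raptor_aggregate n G \<epsilon> m \<beta> (\<lambda>i. if i \<in> C then ya i else y i) = Uniform"
proof -
  have "\<bar>real G / real n * (\<Sum>i\<in>group_users n G g. if i \<in> C then ya i else y i)\<bar>
      \<le> 2 * raptor_alpha n G \<epsilon> m \<beta>" if "g < G" for g
  proof -
    have "\<bar>s\<bar> \<le> 2 * a" if "\<bar>s - b\<bar> < a" "b = 0" for s b a :: real using that by arith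
    thus ?thesis using group_statistic_close[OF assms(1-4) that assms(5,7-10)] assms(6) that by blast
  qed
  hence "\<not> (\<exists>g<G. 2 * raptor_alpha n G \<epsilon> m \<beta>
      < \<bar>real G / real n * (\<Sum>i\<in>group_users n G g. if i \<in> C then ya i else y i)\<bar>)"
    by (meson not_less)
  thus ?thesis by (simp only: raptor_aggregate_def if_False)
qed

lemma raptor_aggregate_NotUniform:
  assumes "0 < G" "G dvd n" "0 < n" "0 < \<epsilon>" "concentrated n G \<epsilon> \<beta> P d S y"
    "g < G" "3 * raptor_alpha n G \<epsilon> m \<beta> \<le> \<bar>set_bias P d (S g)\<bar>"
    "C \<subseteq> {..<n}" "card C = m" "\<forall>i\<in>C. ya i \<in> {rr_scale \<epsilon>, - rr_scale \<epsilon>}"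
    "\<forall>i<n. y i \<in> {rr_scale \<epsilon>, - rr_scale \<epsilon>}"
  shows "raptor_aggregate n G \<epsilon> m \<beta> (\<lambda>i. if i \<in> C then ya i else y i) = NotUniform"
proof -
  have "2 * raptor_alpha n G \<epsilon> m \<beta>
      < \<bar>real G / real n * (\<Sum>i\<in>group_users n G g. if i \<in> C then ya i else y i)\<bar>"
  proof -
    have "2 * a < \<bar>s\<bar>" if "\<bar>s - b\<bar> < a" "3 * a \<le> \<bar>b\<bar>" for s b a :: real using that by arith
    thus ?thesis using group_statistic_close[OF assms(1-4,6,5,8-11)] assms(7) by blast
  qed
  thus ?thesis using assms(6) by (auto simp: raptor_aggregate_def)
qed

lemma ln_four_mult_le:
  assumes "0 < \<beta>" "\<beta> < 1" "2 \<le> real G"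
  shows "ln (4 * real G / \<beta>) \<le> 3 * ln (real G / \<beta>)"
proof -
  have G\<beta>: "2 \<le> real G / \<beta>" using assms by (simp add: field_simps)
  have "ln (4 * real G / \<beta>) = ln 4 + ln (real G / \<beta>)"
    using G\<beta> assms ln_mult[of 4 "real G / \<beta>"] by simp
  also have "ln 4 = 2 * ln (2 :: real)" using ln_realpow[of 2 2] by simp
  also have "ln 2 \<le> ln (real G / \<beta>)" using G\<beta> by simp
  finally show ?thesis by simp
qed

lemma three_raptor_alpha_le:
  assumes "0 < \<beta>" "\<beta> < 1" "2 \<le> real G" "0 < n" "0 < \<epsilon>"
  shows "3 * raptor_alpha n G \<epsilon> m \<beta>
       \<le> 13 * rr_scale \<epsilon> * (sqrt (real G / real n * ln (real G / \<beta>)) + real m * real G / real n)"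
proof -
  define t where "t = real G / real n"
  define q where "q = sqrt (t * ln (real G / \<beta>))"
  have t0: "0 < t" using assms(3,4) by (simp add: t_def)
  have "sqrt (6 * t * ln (4 * real G / \<beta>)) \<le> sqrt ((169 / 9) * (t * ln (real G / \<beta>)))"
  proof (intro real_sqrt_le_mono)
    have "0 \<le> ln (real G / \<beta>)" using assms(1-3) by (simp add: field_simps)
    thus "6 * t * ln (4 * real G / \<beta>) \<le> 169 / 9 * (t * ln (real G / \<beta>))"
      using ln_four_mult_le[OF assms(1-3)] t0 by (simp add: mult_left_mono)
  qed
  also have "\<dots> = 13 / 3 * q" by (simp add: q_def real_sqrt_mult real_sqrt_divide)
  finally have "3 * sqrt (6 * t * ln (4 * real G / \<beta>)) \<le> 13 * q" by simp
  have "3 * raptor_alpha n G \<epsilon> m \<beta>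
      = rr_scale \<epsilon> * (3 * sqrt (6 * t * ln (4 * real G / \<beta>))) + rr_scale \<epsilon> * (6 * (real m * t))"
    by (simp add: raptor_alpha_def t_def algebra_simps)
  also have "\<dots> \<le> rr_scale \<epsilon> * (13 * q) + rr_scale \<epsilon> * (13 * (real m * t))"
    using rr_scale_pos[OF assms(5)] t0 \<open>3 * sqrt _ \<le> 13 * q\<close>
    by (intro add_mono mult_left_mono) auto
  also have "\<dots> = 13 * rr_scale \<epsilon> * (q + real m * real G / real n)"
    by (simp add: t_def algebra_simps)
  finally show ?thesis by (simp add: q_def t_def)
qed

lemma correlation_sq_ge:
  fixes \<delta> :: "nat \<Rightarrow> real"
  assumes "0 < d" "0 \<le> c" "c * sqrt (real d) \<le> (\<Sum>j<d. \<bar>\<delta> j\<bar>)"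
    "(\<Sum>j<d. (\<delta> j)\<^sup>2) / 2 \<le> (\<Sum>j<d. \<delta> j * sign_mem A j)\<^sup>2"
  shows "c\<^sup>2 \<le> 2 * (\<Sum>j<d. \<delta> j * sign_mem A j)\<^sup>2"
proof -
  have "real d * c\<^sup>2 = (c * sqrt (real d))\<^sup>2" by (simp add: power_mult_distrib)
  also have "\<dots> \<le> (\<Sum>j<d. \<bar>\<delta> j\<bar>)\<^sup>2" using assms(2,3) by (intro power_mono) auto
  also have "\<dots> \<le> real d * (\<Sum>j<d. (\<delta> j)\<^sup>2)"
    using Cauchy_Schwarz_ineq_sum[of "\<lambda>_. 1" "\<lambda>j. \<bar>\<delta> j\<bar>" "{..<d}"] by simp
  also have "\<dots> \<le> real d * (2 * (\<Sum>j<d. \<delta> j * sign_mem A j)\<^sup>2)"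
    using assms(4) by (intro mult_left_mono) simp_all
  finally show ?thesis using assms(1) by simp
qed

lemma three_raptor_alpha_le_set_bias:
  assumes "2 \<le> real G" "0 < n" "0 < \<epsilon>" "0 < \<beta>" "\<beta> < 1" "0 < d"
    and far: "20 * rr_scale \<epsilon> * (sqrt (real d * real G / real n * ln (real G / \<beta>))
       + real m * real G * sqrt (real d) / real n) \<le> l1_to_uniform d P"
    and correlated: "(\<Sum>j<d. (pmf P j - 1 / real d)\<^sup>2) / 2 \<le> (set_bias P d A)\<^sup>2"
  shows "3 * raptor_alpha n G \<epsilon> m \<beta> \<le> \<bar>set_bias P d A\<bar>"
proof -
  define x where "x = rr_scale \<epsilon> * (sqrt (real G / real n * ln (real G / \<beta>)) + real m * real G / real n)"
  have x0: "0 \<le> x"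
    using rr_scale_pos[OF assms(3)] assms(1,4,5) by (simp add: x_def field_simps)
  have "sqrt (real d * real G / real n * ln (real G / \<beta>))
      = sqrt (real d) * sqrt (real G / real n * ln (real G / \<beta>))"
    by (simp add: real_sqrt_mult[symmetric])
  hence "(20 * x) * sqrt (real d) \<le> (\<Sum>j<d. \<bar>pmf P j - 1 / real d\<bar>)"
    using far by (simp add: x_def l1_to_uniform_eq algebra_simps)
  hence "(20 * x)\<^sup>2 \<le> 2 * (set_bias P d A)\<^sup>2"
    using correlation_sq_ge[OF assms(6), of "20 * x"] correlated x0 by (simp add: set_bias_def)
  hence "(13 * x)\<^sup>2 \<le> (set_bias P d A)\<^sup>2"
    by (simp add: power_mult_distrib) (use zero_le_power2[of x] in linarith)
  hence "13 * x \<le> \<bar>set_bias P d A\<bar>" using x0 abs_le_square_iff[of "13 * x"] by simp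
  thus ?thesis using three_raptor_alpha_le[OF assms(4,5,1,2,3), of m] by (simp add: x_def)
qed

section \<open>The manipulation game\<close>

lemma set_pmf_client_msgs:
  assumes "y \<in> set_pmf (Pi_pmf {..<n} 0 (\<lambda>i. raptor_client n G \<epsilon> S i (x i)))" "i < n"
  shows "y i \<in> {rr_scale \<epsilon>, - rr_scale \<epsilon>}"
  using assms set_pmf_raptor_client by (fastforce simp: set_Pi_pmf PiE_dflt_def)

lemma emeasure_bind_map_pmf_ge:
  assumes "\<And>c y. c \<in> set_pmf N \<Longrightarrow> y \<in> set_pmf Y \<Longrightarrow> Q y \<Longrightarrow> f c y = v"
  shows "emeasure (measure_pmf Y) {y. Q y} \<le> emeasure (measure_pmf (bind_pmf N (\<lambda>c. map_pmf (f c) Y))) {v}"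
proof -
  have "emeasure (measure_pmf Y) {y. Q y} \<le> emeasure (measure_pmf (map_pmf (f c) Y)) {v}"
    if "c \<in> set_pmf N" for c
  proof -
    have "{y. Q y} \<inter> set_pmf Y \<subseteq> f c -` {v}" using assms that by auto
    hence "emeasure (measure_pmf Y) ({y. Q y} \<inter> set_pmf Y) \<le> emeasure (measure_pmf Y) (f c -` {v})"
      by (rule emeasure_mono) simp
    thus ?thesis by (simp add: emeasure_Int_set_pmf)
  qed
  hence "(\<integral>\<^sup>+_. emeasure (measure_pmf Y) {y. Q y} \<partial>N) \<le> (\<integral>\<^sup>+c. emeasure (measure_pmf (map_pmf (f c) Y)) {v} \<partial>N)"
    by (intro nn_integral_mono_AE AE_pmfI) simp
  thus ?thesis by (simp add: measure_pmf.emeasure_space_1)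
qed

lemma manip_prob_ge:
  assumes valid: "valid_attacker n m \<epsilon> M" and p0: "0 \<le> p"
    and honest: "\<And>S. S \<in> set_pmf (public_rand d G) \<Longrightarrow> Good S \<Longrightarrow>
       p \<le> measure_pmf.prob (honest_msgs n G \<epsilon> P S) {y. Q S y}"
    and decide: "\<And>S y C ya. S \<in> set_pmf (public_rand d G) \<Longrightarrow> Good S \<Longrightarrow> Q S y \<Longrightarrow>
       \<forall>i<n. y i \<in> {rr_scale \<epsilon>, - rr_scale \<epsilon>} \<Longrightarrow> C \<subseteq> {..<n} \<Longrightarrow> card C = m \<Longrightarrow>
       \<forall>i\<in>C. ya i \<in> {rr_scale \<epsilon>, - rr_scale \<epsilon>} \<Longrightarrow>
       raptor_aggregate n G \<epsilon> m \<beta> (\<lambda>i. if i \<in> C then ya i else y i) = v"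
  shows "p * measure_pmf.prob (public_rand d G) {S. Good S} \<le> measure_pmf.prob (manip m n G \<epsilon> \<beta> d P M) {v}"
proof -
  define R where "R = public_rand d G"
  define X where "X = Pi_pmf {..<n} 0 (\<lambda>_. P)"
  define Y where "Y x S = Pi_pmf {..<n} (0::real) (\<lambda>i. raptor_client n G \<epsilon> S i (x i))" for x S
  define out where "out C ya y = raptor_aggregate n G \<epsilon> m \<beta> (\<lambda>i. if i \<in> C then ya i else y i)" for C ya y
  define B where "B x S = bind_pmf (M x S) (\<lambda>(C, ya). map_pmf (out C ya) (Y x S))" for x S
  have manip_eq: "manip m n G \<epsilon> \<beta> d P M = bind_pmf R (\<lambda>S. bind_pmf X (\<lambda>x. B x S))"
    unfolding manip_def R_def X_def B_def Y_def out_def map_pmf_def by (rule bind_commute_pmf)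
  have honest_eq: "bind_pmf X (\<lambda>x. Y x S) = honest_msgs n G \<epsilon> P S" for S
    unfolding X_def Y_def honest_msgs_def by (subst Pi_pmf_bind[where d' = 0]) auto
  have average_eq: "(\<integral>\<^sup>+x. emeasure (Y x S) {y. Q S y} \<partial>X)
      = ennreal (measure_pmf.prob (honest_msgs n G \<epsilon> P S) {y. Q S y})" for S
    by (simp add: honest_eq[symmetric] measure_pmf.emeasure_eq_measure[symmetric])
  have inner: "emeasure (Y x S) {y. Q S y} \<le> emeasure (B x S) {v}"
    if S: "S \<in> set_pmf R" "Good S" for x S
    unfolding B_def case_prod_beta
    by (rule emeasure_bind_map_pmf_ge)
       (use valid decide[OF S[unfolded R_def]] set_pmf_client_msgs[where x = x] in
        \<open>fastforce simp: valid_attacker_def out_def Y_def\<close>)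
  have "ennreal (p * measure_pmf.prob R {S. Good S}) = (\<integral>\<^sup>+S. ennreal p * indicator {S. Good S} S \<partial>R)"
    using p0 by (simp add: nn_integral_cmult_indicator measure_pmf.emeasure_eq_measure ennreal_mult)
  also have "\<dots> \<le> (\<integral>\<^sup>+S. indicator {S. Good S} S * \<integral>\<^sup>+x. emeasure (Y x S) {y. Q S y} \<partial>X \<partial>R)"
  proof (intro nn_integral_mono_AE AE_pmfI)
    fix S assume "S \<in> set_pmf R"
    thus "ennreal p * indicator {S. Good S} S
        \<le> indicator {S. Good S} S * \<integral>\<^sup>+x. emeasure (Y x S) {y. Q S y} \<partial>X"
      using honest[of S] by (auto simp: R_def average_eq intro: ennreal_leI split: split_indicator)
  qed
  also have "\<dots> \<le> (\<integral>\<^sup>+S. \<integral>\<^sup>+x. emeasure (B x S) {v} \<partial>X \<partial>R)"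
    by (intro nn_integral_mono_AE AE_pmfI)
       (auto split: split_indicator intro!: nn_integral_mono inner)
  also have "\<dots> = emeasure (manip m n G \<epsilon> \<beta> d P M) {v}"
    by (simp add: manip_eq)
  finally show ?thesis by (simp add: measure_pmf.emeasure_eq_measure R_def)
qed

lemma manip_uniform:
  assumes "0 < G" "G dvd n" "0 < n" "0 < \<epsilon>" "0 < \<beta>" "\<beta> < 1" "even d" "0 < d"
    "valid_attacker n m \<epsilon> M"
  shows "1 - \<beta> \<le> measure_pmf.prob (manip m n G \<epsilon> \<beta> d (uniform_dist d) M) {Uniform}"
proof -
  have U: "set_pmf (uniform_dist d) \<subseteq> {..<d}" "set_bias (uniform_dist d) d A = 0" for A
    using assms(8) by (simp_all add: set_pmf_uniform_dist set_bias_def pmf_uniform_dist)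
  have "(1 - \<beta> / 2) * measure_pmf.prob (public_rand d G) {S. True}
      \<le> measure_pmf.prob (manip m n G \<epsilon> \<beta> d (uniform_dist d) M) {Uniform}"
  proof (rule manip_prob_ge[OF assms(9)])
    show "0 \<le> 1 - \<beta> / 2" using assms(6) by simp
    show "1 - \<beta> / 2 \<le> measure_pmf.prob (honest_msgs n G \<epsilon> (uniform_dist d) S)
        {y. concentrated n G \<epsilon> \<beta> (uniform_dist d) d S y}"
      if "S \<in> set_pmf (public_rand d G)" for S
      by (rule prob_concentrated[OF assms(1-7) U(1) that])
  qed (use raptor_aggregate_Uniform[OF assms(1-4)] U(2) in blast)
  thus ?thesis using assms(5) by simp
qed

lemma manip_far:
  assumes "2 \<le> real G" "G dvd n" "0 < n" "0 < \<epsilon>" "0 < \<beta>" "\<beta> < 1" "even d" "0 < d"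
    "valid_attacker n m \<epsilon> M" "set_pmf P \<subseteq> {..<d}"
    "20 * rr_scale \<epsilon> * (sqrt (real d * real G / real n * ln (real G / \<beta>))
       + real m * real G * sqrt (real d) / real n) \<le> l1_to_uniform d P"
    "(123 / 124) ^ G \<le> \<beta> / 2"
  shows "1 - \<beta> \<le> measure_pmf.prob (manip m n G \<epsilon> \<beta> d P M) {NotUniform}"
proof -
  have G0: "0 < G" using assms(1) by simp
  have sum_zero: "(\<Sum>j<d. pmf P j - 1 / real d) = 0"
    using sum_pmf_eq_1[OF _ assms(10)] assms(8) by (simp add: sum_subtractf)
  define Good where "Good S \<longleftrightarrow>
      (\<exists>g<G. (\<Sum>j<d. (pmf P j - 1 / real d)\<^sup>2) / 2 \<le> (set_bias P d (S g))\<^sup>2)" for S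
  have "(1 - \<beta> / 2) * measure_pmf.prob (public_rand d G) {S. Good S}
      \<le> measure_pmf.prob (manip m n G \<epsilon> \<beta> d P M) {NotUniform}"
  proof (rule manip_prob_ge[OF assms(9)])
    show "0 \<le> 1 - \<beta> / 2" using assms(6) by simp
    show "1 - \<beta> / 2 \<le> measure_pmf.prob (honest_msgs n G \<epsilon> P S) {y. concentrated n G \<epsilon> \<beta> P d S y}"
      if "S \<in> set_pmf (public_rand d G)" for S
      by (rule prob_concentrated[OF G0 assms(2-7,10) that])
    fix S y C ya
    assume "Good S" and conc: "concentrated n G \<epsilon> \<beta> P d S y"
      and y: "\<forall>i<n. y i \<in> {rr_scale \<epsilon>, - rr_scale \<epsilon>}"
      and C: "C \<subseteq> {..<n}" "card C = m" "\<forall>i\<in>C. ya i \<in> {rr_scale \<epsilon>, - rr_scale \<epsilon>}"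
    then obtain g where "g < G" "(\<Sum>j<d. (pmf P j - 1 / real d)\<^sup>2) / 2 \<le> (set_bias P d (S g))\<^sup>2"
      by (auto simp: Good_def)
    from this(1) three_raptor_alpha_le_set_bias[OF assms(1,3-6,8,11) this(2)]
    show "raptor_aggregate n G \<epsilon> m \<beta> (\<lambda>i. if i \<in> C then ya i else y i) = NotUniform"
      by (rule raptor_aggregate_NotUniform[OF G0 assms(2-4) conc _ _ C y])
  qed
  moreover have "1 - \<beta> / 2 \<le> measure_pmf.prob (public_rand d G) {S. Good S}"
    using prob_exists_correlated_group[OF assms(7,8) sum_zero, of G] assms(12)
    by (simp add: Good_def set_bias_def)
  hence "(1 - \<beta> / 2) * (1 - \<beta> / 2) \<le> (1 - \<beta> / 2) * measure_pmf.prob (public_rand d G) {S. Good S}"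
    using assms(6) by (intro mult_left_mono) simp_all
  moreover have "1 - \<beta> \<le> (1 - \<beta> / 2) * (1 - \<beta> / 2)" by (simp add: algebra_simps)
  ultimately show ?thesis by linarith
qed

section \<open>Number of groups\<close>

text \<open>The constant 124 is the one of half_anticoncentration: each group's set is good for a far
  distribution with probability at least 1/124, independently.\<close>
definition group_count :: "real \<Rightarrow> nat" where
  "group_count \<beta> = nat \<lceil>124 * (ln (1 / \<beta>) + 1)\<rceil>"

lemma group_count_bounds:
  assumes "0 < \<beta>" "\<beta> < 1"
  shows "124 * (ln (1 / \<beta>) + 1) \<le> real (group_count \<beta>)"
    and "real (group_count \<beta>) \<le> 124 * (ln (1 / \<beta>) + 1) + 1"
proof -
  have "0 < ln (1 / \<beta>)" using assms by simp
  hence "real (group_count \<beta>) = of_int \<lceil>124 * (ln (1 / \<beta>) + 1)\<rceil>"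
    unfolding group_count_def by (simp add: not_le)
  thus "124 * (ln (1 / \<beta>) + 1) \<le> real (group_count \<beta>)"
    and "real (group_count \<beta>) \<le> 124 * (ln (1 / \<beta>) + 1) + 1"
    using of_int_ceiling_le_add_one[of "124 * (ln (1 / \<beta>) + 1)"] by linarith+
qed

lemma two_le_group_count:
  assumes "0 < \<beta>" "\<beta> < 1"
  shows "2 \<le> real (group_count \<beta>)"
proof -
  have "124 \<le> 124 * (ln (1 / \<beta>) + 1)" using assms by simp
  with group_count_bounds(1)[OF assms] show ?thesis by linarith
qed

lemma group_count_power_le:
  assumes "0 < \<beta>" "\<beta> < 1"
  shows "(123 / 124 :: real) ^ group_count \<beta> \<le> \<beta> / 2"
proof -
  have "(123 / 124 :: real) ^ group_count \<beta> \<le> exp (- 1 / 124) ^ group_count \<beta>"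
    using exp_ge_add_one_self[of "- 1 / 124"] by (intro power_mono) auto
  also have "\<dots> = exp (- real (group_count \<beta>) / 124)" by (simp add: exp_of_nat_mult[symmetric])
  also have "\<dots> \<le> exp (- (ln (1 / \<beta>) + 1))" using group_count_bounds(1)[OF assms] by simp
  also have "\<dots> = \<beta> * exp (- 1)" using assms by (simp add: exp_diff exp_minus ln_div divide_inverse)
  also have "\<dots> \<le> \<beta> / 2"
    using assms exp_ge_add_one_self[of 1] by (simp add: exp_minus field_simps)
  finally show ?thesis .
qed

lemma group_count_Theta: "(\<lambda>b. real (group_count b)) \<in> \<Theta>[at_right 0](\<lambda>b. ln (1 / b))"
proof -
  have ev: "eventually (\<lambda>b. 0 < b \<and> b < 1 \<and> 1 \<le> ln (1 / b)) (at_right (0::real))"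
  proof -
    have "eventually (\<lambda>b. 0 < b \<and> b < exp (- 1)) (at_right (0::real))"
      by (rule eventually_mono[OF eventually_at_right_real[of 0 "exp (- 1)"]]) auto
    thus ?thesis
    proof eventually_elim
      case (elim b)
      hence "exp 1 \<le> 1 / b" by (simp add: exp_minus field_simps)
      with elim show ?case by (smt (verit) exp_gt_zero exp_less_one_iff ln_exp ln_le_cancel_iff)
    qed
  qed
  show ?thesis
  proof (rule bigthetaI)
    show "(\<lambda>b. real (group_count b)) \<in> O[at_right 0](\<lambda>b. ln (1 / b))"
      by (rule bigoI[where c = 249], use ev in eventually_elim)
         (use group_count_bounds(2) in fastforce)
    show "(\<lambda>b. real (group_count b)) \<in> \<Omega>[at_right 0](\<lambda>b. ln (1 / b))"
      unfolding bigomega_iff_bigo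
      by (rule bigoI[where c = 1], use ev in eventually_elim)
         (use group_count_bounds(1) in fastforce)
  qed
qed

theorem mainTheorem16:
  shows "\<exists>c::real. \<exists>Gf :: real \<Rightarrow> nat.
    (\<lambda>b. real (Gf b)) \<in> \<Theta>[at_right 0](\<lambda>b. ln (1 / b)) \<and>
    (\<forall>\<beta> \<epsilon> m n d M.
       0 < \<beta> \<and> \<beta> < 1 \<and> 0 < \<epsilon> \<and> 1 \<le> m \<and> m \<le> n \<and> Gf \<beta> dvd n \<and>
       even d \<and> 0 < d \<and> valid_attacker n m \<epsilon> M \<longrightarrow>
       measure_pmf.prob (manip m n (Gf \<beta>) \<epsilon> \<beta> d (uniform_dist d) M) {Uniform} \<ge> 1 - \<beta> \<and>
       (\<forall>P :: nat pmf. set_pmf P \<subseteq> {..<d} \<and>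
          l1_to_uniform d P \<ge> c * rr_scale \<epsilon> *
            (sqrt (real d * real (Gf \<beta>) / real n * ln (real (Gf \<beta>) / \<beta>))
             + real m * real (Gf \<beta>) * sqrt (real d) / real n) \<longrightarrow>
          measure_pmf.prob (manip m n (Gf \<beta>) \<epsilon> \<beta> d P M) {NotUniform} \<ge> 1 - \<beta>))"
proof (intro exI conjI allI impI)
  show "(\<lambda>b. real (group_count b)) \<in> \<Theta>[at_right 0](\<lambda>b. ln (1 / b))"
    by (rule group_count_Theta)
next
  fix \<beta> \<epsilon> :: real and m n d :: nat and M :: attacker and P :: "nat pmf"
  assume A: "0 < \<beta> \<and> \<beta> < 1 \<and> 0 < \<epsilon> \<and> 1 \<le> m \<and> m \<le> n \<and> group_count \<beta> dvd n \<and>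
       even d \<and> 0 < d \<and> valid_attacker n m \<epsilon> M"
  hence G2: "2 \<le> real (group_count \<beta>)" and n0: "0 < n" using two_le_group_count by auto
  show "1 - \<beta> \<le> measure_pmf.prob (manip m n (group_count \<beta>) \<epsilon> \<beta> d (uniform_dist d) M) {Uniform}"
    using manip_uniform A G2 n0 by simp
  assume "set_pmf P \<subseteq> {..<d} \<and> 20 * rr_scale \<epsilon> *
      (sqrt (real d * real (group_count \<beta>) / real n * ln (real (group_count \<beta>) / \<beta>))
       + real m * real (group_count \<beta>) * sqrt (real d) / real n) \<le> l1_to_uniform d P"
  thus "1 - \<beta> \<le> measure_pmf.prob (manip m n (group_count \<beta>) \<epsilon> \<beta> d P M) {NotUniform}"
    using manip_far[OF G2 _ n0] group_count_power_le A by simp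
qed

end
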